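(* Let $I$ be a nontrivial real interval (nonempty and not a singleton) and let $n\ge 2$ be an integer. A function $f\colon I^n\to I$ is continuous, symmetric, cancellative, and associative if and only if there exists a continuous and strictly monotonic function $\varphi\colon I\to J$ such that $$f(x_1,\dots,x_n)=\varphi^{-1}\Big(\sum_{i=1}^n \varphi(x_i)\Big)\quad\text{for all }x_1,\dots,x_n\in I,$$ where $J$ is a real interval of one of the forms $]-\infty,b[$, $]-\infty,b]$, $]a,\infty[$, $[a,\infty[$, or $\mathbb{R}=]-\infty,\infty[$, with $b\le 0\le a$. Moreover, for such a function $f$, the interval $I$ is necessarily open at least at one end, and $\varphi$ can be chosen to be strictly increasing; in other words, the $n$-ary semigroup $(I,f)$ is topologically order-isomorphic to the $n$-ary semigroup $(J,+)$.
   Context: A function $f\colon I^n\to I$ is associative if for each $i=1,\dots,n-1$ and all $x_1,\dots,x_{2n-1}\in I$: $f(x_1,\dots,x_{i-1},f(x_i,\dots,x_{i+n-1}),x_{i+n},\dots,x_{2n-1})=f(x_1,\dots,x_i,f(x_{i+1},\dots,x_{i+n}),x_{i+n+1},\dots,x_{2n-1})$; the pair $(I,f)$ is then called an $n$-ary semigroup. $f$ is cancellative if it is one-to-one in each variable: for every $k\in\{1,\dots,n\}$ and $\mathbf{x},\mathbf{x}'\in I^n$, if $x_i=x'_i$ for all $i\ne k$ and $f(\mathbf{x})=f(\mathbf{x}')$, then $x_k=x'_k$. $f$ is symmetric if $f(x_1,\dots,x_n)=f(x_{\sigma(1)},\dots,x_{\sigma(n)})$ for every permutation $\sigma$ of $\{1,\dots,n\}$.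 *)

theory Defs
  imports "HOL-Analysis.Analysis"
begin

text \<open>An n-ary operation on I is modelled as a function on real lists; only its
values on lists of length n with entries in I (the points of I^n) matter.\<close>

definition tuples :: "real set \<Rightarrow> nat \<Rightarrow> real list set" where
  "tuples I n = {xs. length xs = n \<and> set xs \<subseteq> I}"

definition maps_into :: "real set \<Rightarrow> nat \<Rightarrow> (real list \<Rightarrow> real) \<Rightarrow> bool" where
  "maps_into I n f \<longleftrightarrow> (\<forall>xs\<in>tuples I n. f xs \<in> I)"

definition continuous_nary :: "real set \<Rightarrow> nat \<Rightarrow> (real list \<Rightarrow> real) \<Rightarrow> bool" where
  "continuous_nary I n f \<longleftrightarrow>
     (\<forall>xs\<in>tuples I n. \<forall>e>0. \<exists>d>0. \<forall>ys\<in>tuples I n.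
        (\<forall>i<n. \<bar>ys ! i - xs ! i\<bar> < d) \<longrightarrow> \<bar>f ys - f xs\<bar> < e)"

definition symmetric_nary :: "real set \<Rightarrow> nat \<Rightarrow> (real list \<Rightarrow> real) \<Rightarrow> bool" where
  "symmetric_nary I n f \<longleftrightarrow>
     (\<forall>xs\<in>tuples I n. \<forall>\<sigma>. \<sigma> permutes {..<n} \<longrightarrow> f (map (\<lambda>i. xs ! \<sigma> i) [0..<n]) = f xs)"

definition cancellative_nary :: "real set \<Rightarrow> nat \<Rightarrow> (real list \<Rightarrow> real) \<Rightarrow> bool" where
  "cancellative_nary I n f \<longleftrightarrow>
     (\<forall>k<n. \<forall>xs\<in>tuples I n. \<forall>ys\<in>tuples I n.
        (\<forall>i<n. i \<noteq> k \<longrightarrow> xs ! i = ys ! i) \<and> f xs = f ys \<longrightarrow> xs ! k = ys ! k)"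

text \<open>Associativity; indices are 0-based: position i (0 \<le> i < n-1) vs position i+1.\<close>
definition associative_nary :: "real set \<Rightarrow> nat \<Rightarrow> (real list \<Rightarrow> real) \<Rightarrow> bool" where
  "associative_nary I n f \<longleftrightarrow>
     (\<forall>i. i < n - 1 \<longrightarrow> (\<forall>xs\<in>tuples I (2 * n - 1).
        f (take i xs @ [f (take n (drop i xs))] @ drop (i + n) xs)
      = f (take (Suc i) xs @ [f (take n (drop (Suc i) xs))] @ drop (Suc i + n) xs)))"

definition admissible_J :: "real set \<Rightarrow> bool" where
  "admissible_J J \<longleftrightarrow>
     (\<exists>b\<le>0. J = {..<b} \<or> J = {..b}) \<or> (\<exists>a\<ge>0. J = {a<..} \<or> J = {a..}) \<or> J = UNIV"

definition represents :: "real set \<Rightarrow> nat \<Rightarrow> (real list \<Rightarrow> real) \<Rightarrow> (real \<Rightarrow> real) \<Rightarrow> real set \<Rightarrow> bool" where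
  "represents I n f \<phi> J \<longleftrightarrow>
     admissible_J J \<and> continuous_on I \<phi> \<and> bij_betw \<phi> I J \<and>
     (\<forall>xs\<in>tuples I n. f xs = inv_into I \<phi> (sum_list (map \<phi> xs)))"

end

theory Submission
  imports Defs
begin

text \<open>
  Fix a point \<open>a \<in> I\<close> and reduce \<open>f\<close> to the binary operation
  \<open>x \<odot> y = f(x, y, a, \<dots>, a)\<close>. Associativity and symmetry of \<open>f\<close> make \<open>\<odot>\<close> a continuous,
  commutative, associative and cancellative operation on \<open>I\<close>, and they let \<open>\<odot>\<close> act on
  any single argument of \<open>f\<close>: \<open>f(\<dots>, x\<^sub>k \<odot> y, \<dots>) = f(x) \<odot> y\<close>.
  By Aczel's theorem \<open>\<odot>\<close> is isomorphic to a subsemigroup of \<open>(\<real>, +)\<close>: there is a continuous strictly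
  increasing \<open>\<psi>\<close> with \<open>\<psi>(x \<odot> y) = \<psi> x + \<psi> y\<close>. The defect \<open>\<psi>(f x) - \<Sum>\<^sub>i \<psi>(x\<^sub>i)\<close>
  is then invariant under the action of \<open>\<odot>\<close> on each argument and hence constant, so a
  translate \<open>\<phi>\<close> of \<open>\<psi>\<close> turns \<open>f\<close> into addition. The image \<open>\<phi>(I)\<close> is an interval closed
  under \<open>t \<mapsto> n t\<close>, which forces it to be one of the admissible unbounded intervals;
  in particular \<open>I\<close> cannot contain both of its endpoints.

  Aczel's \<open>\<psi>\<close> is a logarithm to base \<open>u\<close>, for some \<open>u\<close> with \<open>z < z \<odot> u\<close> on \<open>I\<close>:
  \<open>\<psi> x\<close> is the supremum of the fractions \<open>m/k\<close> with \<open>u\<^sup>m \<le> x\<^sup>k\<close>.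
\<close>

lemma connected_nonvanishing_sign:
  fixes F :: "'a::topological_space \<Rightarrow> real"
  assumes "connected S" "continuous_on S F" "\<And>s. s \<in> S \<Longrightarrow> F s \<noteq> 0" "s \<in> S" "t \<in> S"
  shows "F s > 0 \<longleftrightarrow> F t > 0"
proof -
  have "connected (F ` S)"
    using connected_continuous_image[OF assms(2,1)] .
  then have "0 \<in> F ` S" if "F s < 0 \<and> F t > 0 \<or> F t < 0 \<and> F s > 0"
    using that assms(4,5) unfolding connected_iff_interval by (meson image_eqI less_imp_le)
  then show ?thesis
    using assms(3-5) by (metis image_iff linorder_neqE_linordered_idom)
qed

section \<open>Continuous cancellative semigroups on a real interval\<close>

locale interval_semigroup =
  fixes I :: "real set" and g :: "real \<Rightarrow> real \<Rightarrow> real" (infixl "\<odot>" 70)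
  assumes interval: "is_interval I"
    and nontrivial: "\<exists>x\<in>I. \<exists>y\<in>I. x < y"
    and closed: "\<And>x y. x \<in> I \<Longrightarrow> y \<in> I \<Longrightarrow> x \<odot> y \<in> I"
    and commute: "\<And>x y. x \<in> I \<Longrightarrow> y \<in> I \<Longrightarrow> x \<odot> y = y \<odot> x"
    and assoc: "\<And>x y z. x \<in> I \<Longrightarrow> y \<in> I \<Longrightarrow> z \<in> I \<Longrightarrow> x \<odot> y \<odot> z = x \<odot> (y \<odot> z)"
    and cancel: "\<And>x y z. x \<in> I \<Longrightarrow> y \<in> I \<Longrightarrow> z \<in> I \<Longrightarrow> x \<odot> z = y \<odot> z \<Longrightarrow> x = y"
    and continuous: "continuous_on (I \<times> I) (\<lambda>(x, y). x \<odot> y)"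
begin

lemma continuous_on_op:
  assumes "continuous_on S a" "continuous_on S b" "a ` S \<subseteq> I" "b ` S \<subseteq> I"
  shows "continuous_on S (\<lambda>s. a s \<odot> b s)"
  using continuous_on_compose2[OF continuous continuous_on_Pair[OF assms(1,2)]] assms(3,4)
  by auto

lemma continuous_on_op_left: "y \<in> I \<Longrightarrow> continuous_on I (\<lambda>x. x \<odot> y)"
  by (rule continuous_on_op) (auto simp: continuous_on_id)

lemma continuous_on_op_right: "x \<in> I \<Longrightarrow> continuous_on I (\<lambda>y. x \<odot> y)"
  by (rule continuous_on_op) (auto simp: continuous_on_id)

lemma strict_mono_left:
  assumes "x \<in> I" "y \<in> I" "z \<in> I" "x < y"
  shows "x \<odot> z < y \<odot> z"
proof -
  have mono_or_antimono: "strict_mono_on I (\<lambda>x. x \<odot> z) \<or> strict_antimono_on I (\<lambda>x. x \<odot> z)"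
    if "z \<in> I" for z
    using injective_eq_monotone_map[OF interval continuous_on_op_left]
      cancel that by (auto simp: inj_on_def)
  obtain a b where ab: "a \<in> I" "b \<in> I" "a < b"
    using nontrivial by blast
  have sign: "a \<odot> z < b \<odot> z \<longleftrightarrow> a \<odot> a < b \<odot> a" if "z \<in> I" for z
  proof -
    have "b \<odot> z - a \<odot> z > 0 \<longleftrightarrow> b \<odot> a - a \<odot> a > 0"
      by (rule connected_nonvanishing_sign[of I])
        (use ab that cancel in \<open>auto intro!: continuous_intros continuous_on_op
          simp: is_interval_connected[OF interval]\<close>)
    then show ?thesis by simp
  qed
  have "a \<odot> a < b \<odot> a"
  proof (rule ccontr)
    assume "\<not> a \<odot> a < b \<odot> a"
    then have anti: "w \<odot> z < v \<odot> z" if "v \<in> I" "w \<in> I" "z \<in> I" "v < w" for v w z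
      using mono_or_antimono[OF that(3)] sign[OF that(3)] ab that
      unfolding monotone_on_def by blast
    \<comment> \<open>\<open>x \<mapsto> (a \<odot> a) \<odot> x\<close> is the square of the decreasing map \<open>x \<mapsto> a \<odot> x\<close>, so it increases\<close>
    have "(a \<odot> a) \<odot> a < (b \<odot> a) \<odot> a"
      using anti[of "b \<odot> a" "a \<odot> a" a] anti[OF ab(1,2,1,3)] ab closed by blast
    also have "(b \<odot> a) \<odot> a = (a \<odot> a) \<odot> b"
      using ab assoc commute closed by metis
    finally have "(a \<odot> a) \<odot> a < (a \<odot> a) \<odot> b" .
    moreover have "(a \<odot> a) \<odot> b < (a \<odot> a) \<odot> a"
      using anti[OF ab(1,2) _ ab(3), of "a \<odot> a"] ab closed commute by metis
    ultimately show False
      by simp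
  qed
  then have "strict_mono_on I (\<lambda>x. x \<odot> z)"
    using mono_or_antimono[OF assms(3)] sign[OF assms(3)] ab unfolding monotone_on_def by fastforce
  then show ?thesis
    using assms unfolding monotone_on_def by blast
qed

lemma strict_mono_right: "x \<in> I \<Longrightarrow> y \<in> I \<Longrightarrow> z \<in> I \<Longrightarrow> x < y \<Longrightarrow> z \<odot> x < z \<odot> y"
  using strict_mono_left commute by metis

lemma le_cancel_left: "x \<in> I \<Longrightarrow> y \<in> I \<Longrightarrow> z \<in> I \<Longrightarrow> x \<odot> z \<le> y \<odot> z \<longleftrightarrow> x \<le> y"
  using strict_mono_left by (metis linorder_not_le order_less_imp_le order.strict_iff_order)

lemma le_cancel_right: "x \<in> I \<Longrightarrow> y \<in> I \<Longrightarrow> z \<in> I \<Longrightarrow> z \<odot> x \<le> z \<odot> y \<longleftrightarrow> x \<le> y"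
  using le_cancel_left commute by metis

lemma op_mono:
  "a \<in> I \<Longrightarrow> b \<in> I \<Longrightarrow> c \<in> I \<Longrightarrow> d \<in> I \<Longrightarrow> a \<le> b \<Longrightarrow> c \<le> d \<Longrightarrow> a \<odot> c \<le> b \<odot> d"
  by (meson closed le_cancel_left le_cancel_right order_trans)

lemma op_strict_mono:
  "a \<in> I \<Longrightarrow> b \<in> I \<Longrightarrow> c \<in> I \<Longrightarrow> d \<in> I \<Longrightarrow> a < b \<Longrightarrow> c < d \<Longrightarrow> a \<odot> c < b \<odot> d"
  by (meson closed strict_mono_left strict_mono_right order.strict_trans)

lemma op_swap_middle:
  "a \<in> I \<Longrightarrow> b \<in> I \<Longrightarrow> c \<in> I \<Longrightarrow> d \<in> I \<Longrightarrow> (a \<odot> b) \<odot> (c \<odot> d) = (a \<odot> c) \<odot> (b \<odot> d)"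
  by (metis assoc commute closed)

end

section \<open>Aczel's logarithm\<close>

locale aczel_construction = interval_semigroup +
  fixes u :: real
  assumes u_mem: "u \<in> I"
    and shift_up: "\<And>z. z \<in> I \<Longrightarrow> z < z \<odot> u"
begin

text \<open>\<open>gpow x k\<close> is the \<open>k\<close>-th power \<open>x \<odot> \<dots> \<odot> x\<close>; it is only used for \<open>k \<ge> 1\<close>.\<close>

fun gpow :: "real \<Rightarrow> nat \<Rightarrow> real" where
  "gpow x 0 = x"
| "gpow x (Suc 0) = x"
| "gpow x (Suc (Suc k)) = gpow x (Suc k) \<odot> x"

lemma gpow_mem: "x \<in> I \<Longrightarrow> gpow x k \<in> I"
  by (induction x k rule: gpow.induct) (auto intro: closed)

lemma gpow_Suc: "k \<ge> 1 \<Longrightarrow> gpow x (Suc k) = gpow x k \<odot> x"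
  by (cases k) auto

lemma gpow_add:
  assumes "x \<in> I" "a \<ge> 1" "b \<ge> 1"
  shows "gpow x a \<odot> gpow x b = gpow x (a + b)"
  using assms(3)
proof (induction b rule: nat_induct_at_least)
  case base
  then show ?case using gpow_Suc[of a x] assms by simp
next
  case (Suc b)
  have "gpow x a \<odot> gpow x (Suc b) = gpow x a \<odot> gpow x b \<odot> x"
    using Suc gpow_Suc[of b x] assoc[of "gpow x a" "gpow x b" x] gpow_mem assms by simp
  also have "\<dots> = gpow x (Suc (a + b))"
    using Suc gpow_Suc[of "a + b" x] assms by simp
  finally show ?case by simp
qed

lemma gpow_mult:
  assumes "x \<in> I" "a \<ge> 1" "b \<ge> 1"
  shows "gpow (gpow x a) b = gpow x (a * b)"
  using assms(3)
proof (induction b rule: nat_induct_at_least)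
  case (Suc b)
  then show ?case
    using gpow_Suc gpow_add[of x "a * b" a] assms by (simp add: add.commute)
qed simp

lemma gpow_op:
  assumes "x \<in> I" "y \<in> I" "k \<ge> 1"
  shows "gpow (x \<odot> y) k = gpow x k \<odot> gpow y k"
  using assms(3)
proof (induction k rule: nat_induct_at_least)
  case (Suc k)
  then show ?case
    using gpow_Suc op_swap_middle gpow_mem assms by simp
qed simp

lemma gpow_strict_mono:
  assumes "x \<in> I" "y \<in> I" "x < y" "k \<ge> 1"
  shows "gpow x k < gpow y k"
  using assms(4)
  by (induction k rule: nat_induct_at_least) (use assms in \<open>auto simp: gpow_Suc op_strict_mono gpow_mem\<close>)

lemma gpow_mono: "x \<in> I \<Longrightarrow> y \<in> I \<Longrightarrow> x \<le> y \<Longrightarrow> k \<ge> 1 \<Longrightarrow> gpow x k \<le> gpow y k"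
  using gpow_strict_mono by (cases "x = y") (auto simp: order_less_imp_le)

lemma gpow_le_iff: "x \<in> I \<Longrightarrow> y \<in> I \<Longrightarrow> k \<ge> 1 \<Longrightarrow> gpow x k \<le> gpow y k \<longleftrightarrow> x \<le> y"
  using gpow_mono gpow_strict_mono by (meson linorder_not_le)

lemma gpow_u_strict_mono:
  assumes "a \<ge> 1" "a < b"
  shows "gpow u a < gpow u b"
proof -
  have "b \<ge> Suc a"
    using assms by simp
  then show ?thesis
  proof (induction b rule: nat_induct_at_least)
    case (Suc b)
    have "gpow u b < gpow u (Suc b)"
      using Suc assms gpow_Suc shift_up gpow_mem u_mem by simp
    then show ?case
      using Suc by (cases "Suc a < Suc b") auto
  qed (use assms gpow_Suc shift_up gpow_mem u_mem in simp)
qed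

lemma gpow_u_mono: "a \<ge> 1 \<Longrightarrow> a \<le> b \<Longrightarrow> gpow u a \<le> gpow u b"
  using gpow_u_strict_mono by (cases "a = b") (auto simp: order_less_imp_le)

lemma continuous_on_gpow: "continuous_on I (\<lambda>x. gpow x k)"
proof (induction k rule: nat.induct)
  case (Suc k)
  then show ?case
    by (cases k) (auto intro!: continuous_on_op continuous_on_id simp: gpow_mem)
qed (simp add: continuous_on_id)

text \<open>Archimedean property: the powers of \<open>u\<close> leave every bounded part of \<open>I\<close>, since an
  increasing sequence \<open>s (i + 1) = s i \<odot> u\<close> in \<open>I\<close> with a limit \<open>L \<in> I\<close> would give \<open>L = L \<odot> u\<close>.\<close>

lemma archimedean:
  assumes t: "t \<in> I" and x: "x \<in> I"
  shows "\<exists>b\<ge>1. x < t \<odot> gpow u b"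
proof (rule ccontr)
  assume "\<not> ?thesis"
  then have bound: "t \<odot> gpow u b \<le> x" if "b \<ge> 1" for b
    using that by force
  define s where "s b = t \<odot> gpow u (Suc b)" for b
  have s_mem: "s b \<in> I" for b
    unfolding s_def using closed t gpow_mem u_mem by simp
  have s_Suc: "s (Suc b) = s b \<odot> u" for b
    unfolding s_def using gpow_Suc[of "Suc b" u] assoc[of t "gpow u (Suc b)" u] t gpow_mem u_mem
    by simp
  have inc: "incseq s"
    by (rule incseq_SucI) (simp add: s_Suc shift_up s_mem less_imp_le)
  have bdd: "bdd_above (range s)"
    using bound unfolding s_def by (intro bdd_aboveI[of _ x]) auto
  define L where "L = (SUP i. s i)"
  have lim: "s \<longlonglongrightarrow> L"
    unfolding L_def by (rule LIMSEQ_incseq_SUP[OF bdd inc])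
  have "s 0 \<le> L"
    unfolding L_def by (rule cSUP_upper[OF _ bdd]) simp
  moreover have "L \<le> x"
    unfolding L_def by (rule cSUP_least) (auto simp: s_def bound)
  ultimately have L_mem: "L \<in> I"
    using interval s_mem x unfolding is_interval_1 by blast
  have "(\<lambda>b. s b \<odot> u) \<longlonglongrightarrow> L \<odot> u"
    by (rule continuous_on_tendsto_compose[OF continuous_on_op_left[OF u_mem] lim L_mem])
      (simp add: s_mem)
  moreover have "(\<lambda>b. s b \<odot> u) \<longlonglongrightarrow> L"
    using lim unfolding s_Suc[symmetric] by (rule LIMSEQ_Suc)
  ultimately have "L \<odot> u = L"
    by (rule LIMSEQ_unique)
  then show False
    using shift_up[OF L_mem] by simp
qed

text \<open>\<open>ratio_le k m x\<close> encodes \<open>u\<^sup>m \<le> x\<^sup>k\<close>, i.e.\ \<open>m / k \<le> log\<^sub>u x\<close>; for \<open>m \<le> 0\<close> it is read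
  as \<open>u\<^sup>m\<^sup>+\<^sup>j \<le> x\<^sup>k \<odot> u\<^sup>j\<close> for a shift \<open>j\<close> making all exponents positive, and the choice of \<open>j\<close>
  does not matter.\<close>

definition ratio_le_at :: "nat \<Rightarrow> int \<Rightarrow> real \<Rightarrow> nat \<Rightarrow> bool" where
  "ratio_le_at k m x j \<longleftrightarrow> gpow u (nat (m + int j)) \<le> gpow x k \<odot> gpow u j"

definition ratio_le :: "nat \<Rightarrow> int \<Rightarrow> real \<Rightarrow> bool" where
  "ratio_le k m x \<longleftrightarrow> (\<exists>j::nat. j \<ge> 1 \<and> m + int j \<ge> 1 \<and> ratio_le_at k m x j)"

lemma ratio_le_at_Suc:
  assumes "x \<in> I" "j \<ge> 1" "m + int j \<ge> 1"
  shows "ratio_le_at k m x (Suc j) \<longleftrightarrow> ratio_le_at k m x j"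
proof -
  have "nat (m + int (Suc j)) = Suc (nat (m + int j))"
    using assms by simp
  then have "gpow u (nat (m + int (Suc j))) = gpow u (nat (m + int j)) \<odot> u"
    using assms by (simp add: gpow_Suc)
  moreover have "gpow x k \<odot> gpow u (Suc j) = gpow x k \<odot> gpow u j \<odot> u"
    using gpow_Suc[of j u] assms assoc gpow_mem u_mem by simp
  ultimately show ?thesis
    unfolding ratio_le_at_def using le_cancel_left gpow_mem u_mem closed assms by simp
qed

lemma ratio_le_at_shift:
  assumes "x \<in> I" "j \<ge> 1" "m + int j \<ge> 1"
  shows "ratio_le_at k m x (j + d) \<longleftrightarrow> ratio_le_at k m x j"
  by (induction d) (use ratio_le_at_Suc assms in auto)

lemma ratio_le_iff_ratio_le_at:
  assumes "x \<in> I" "j \<ge> 1" "m + int j \<ge> 1"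
  shows "ratio_le k m x \<longleftrightarrow> ratio_le_at k m x j"
proof
  assume "ratio_le k m x"
  then obtain j' where j': "j' \<ge> 1" "m + int j' \<ge> 1" "ratio_le_at k m x j'"
    unfolding ratio_le_def by blast
  show "ratio_le_at k m x j"
  proof (cases "j \<le> j'")
    case True
    then show ?thesis using ratio_le_at_shift[OF assms, of k "j' - j"] j' by simp
  next
    case False
    then show ?thesis using ratio_le_at_shift[OF assms(1) j'(1,2), of k "j - j'"] j' by simp
  qed
next
  assume "ratio_le_at k m x j"
  then show "ratio_le k m x" unfolding ratio_le_def using assms by blast
qed

lemma common_shift:
  obtains j :: nat where "j \<ge> 1" "m + int j \<ge> 1" "m' + int j \<ge> 1"
  using that[of "max (max 1 (nat (1 - m))) (nat (1 - m'))"] by auto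

lemma ratio_le_antimono:
  assumes "x \<in> I" "ratio_le k m x" "m' \<le> m"
  shows "ratio_le k m' x"
proof -
  obtain j where j: "j \<ge> 1" "m' + int j \<ge> 1" "m + int j \<ge> 1"
    using common_shift by blast
  then have "gpow u (nat (m' + int j)) \<le> gpow u (nat (m + int j))"
    using assms by (intro gpow_u_mono) auto
  then show ?thesis
    using assms j ratio_le_iff_ratio_le_at unfolding ratio_le_at_def by (meson order_trans)
qed

lemma ratio_le_exists:
  assumes "x \<in> I"
  shows "\<exists>m. ratio_le k m x"
proof -
  obtain b where b: "b \<ge> 1" "u < gpow x k \<odot> gpow u b"
    using archimedean[OF gpow_mem[OF assms] u_mem] by blast
  then have "ratio_le_at k (1 - int b) x b"
    unfolding ratio_le_at_def by simp
  then show ?thesis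
    unfolding ratio_le_def using b by force
qed

lemma not_ratio_le_exists:
  assumes "x \<in> I"
  shows "\<exists>m. \<not> ratio_le k m x"
proof -
  obtain b where b: "b \<ge> 1" "gpow x k \<odot> u < u \<odot> gpow u b"
    using archimedean[OF u_mem closed[OF gpow_mem[OF assms] u_mem]] by blast
  moreover have "u \<odot> gpow u b = gpow u (Suc b)"
    using gpow_add[OF u_mem, of 1 b] b by simp
  moreover have "nat (int b + 1) = Suc b"
    by simp
  ultimately have "\<not> ratio_le_at k (int b) x 1"
    unfolding ratio_le_at_def by simp
  then show ?thesis
    using ratio_le_iff_ratio_le_at[OF assms, of 1 "int b" k] by auto
qed

lemma ratio_le_step:
  assumes "x \<in> I"
  shows "\<exists>m. ratio_le k m x \<and> \<not> ratio_le k (m + 1) x"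
proof (rule ccontr)
  assume step: "\<not> ?thesis"
  obtain m0 m1 where m0: "ratio_le k m0 x" and m1: "\<not> ratio_le k m1 x"
    using ratio_le_exists not_ratio_le_exists assms by blast
  have "ratio_le k (m0 + int d) x" for d
  proof (induction d)
    case (Suc d)
    then show ?case
      using step by (metis add.assoc add.commute of_nat_Suc)
  qed (use m0 in simp)
  from this[of "nat (m1 - m0)"] have "ratio_le k (max m0 m1) x"
    by (cases "m0 \<le> m1") (auto simp: max_def)
  then show False
    using ratio_le_antimono[OF assms _ max.cobounded2] m1 by blast
qed

lemma ratio_le_at_power:
  assumes "x \<in> I" "k \<ge> 1" "l \<ge> 1" "j \<ge> 1" "m + int j \<ge> 1"
  shows "ratio_le_at (k * l) (m * int l) x (j * l) \<longleftrightarrow> ratio_le_at k m x j"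
proof -
  have "m * int l + int (j * l) = (m + int j) * int l"
    by (simp add: algebra_simps)
  then have "nat (m * int l + int (j * l)) = nat (m + int j) * l"
    using assms by (simp add: nat_mult_distrib)
  then have "gpow u (nat (m * int l + int (j * l))) = gpow (gpow u (nat (m + int j))) l"
    using assms u_mem by (simp add: gpow_mult)
  moreover have "gpow x (k * l) \<odot> gpow u (j * l) = gpow (gpow x k \<odot> gpow u j) l"
    using assms u_mem by (simp add: gpow_op gpow_mult gpow_mem)
  ultimately show ?thesis
    unfolding ratio_le_at_def using assms gpow_mem u_mem closed by (simp add: gpow_le_iff)
qed

lemma ratio_le_power_iff:
  assumes "x \<in> I" "k \<ge> 1" "l \<ge> 1"
  shows "ratio_le (k * l) (m * int l) x \<longleftrightarrow> ratio_le k m x"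
proof -
  obtain j where j: "j \<ge> 1" "m + int j \<ge> 1"
    using common_shift by blast
  have "m * int l + int (j * l) = (m + int j) * int l"
    by (simp add: algebra_simps)
  also have "\<dots> \<ge> 1"
    using j assms mult_mono[of 1 "m + int j" 1 "int l"] by simp
  finally have "ratio_le (k * l) (m * int l) x \<longleftrightarrow> ratio_le_at (k * l) (m * int l) x (j * l)"
    using assms j by (intro ratio_le_iff_ratio_le_at) auto
  also have "\<dots> \<longleftrightarrow> ratio_le_at k m x j"
    using ratio_le_at_power assms j by blast
  also have "\<dots> \<longleftrightarrow> ratio_le k m x"
    using ratio_le_iff_ratio_le_at assms j by blast
  finally show ?thesis .
qed

lemma ratio_le_less_not_ratio_le:
  assumes "x \<in> I" "k \<ge> 1" "k' \<ge> 1" "ratio_le k m x" "\<not> ratio_le k' m' x"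
  shows "real_of_int m / real k < real_of_int m' / real k'"
proof -
  have "ratio_le (k * k') (m * int k') x"
    using ratio_le_power_iff assms by simp
  moreover have "\<not> ratio_le (k * k') (m' * int k) x"
    using ratio_le_power_iff[OF assms(1,3,2)] assms(5) by (simp add: mult.commute)
  ultimately have "m * int k' < m' * int k"
    using ratio_le_antimono[OF assms(1)] by (meson linorder_not_le)
  then have "real_of_int m * real k' < real_of_int m' * real k"
    by (metis of_int_less_iff of_int_mult of_int_of_nat_eq)
  then show ?thesis
    using assms by (simp add: divide_simps)
qed

definition aczel_log :: "real \<Rightarrow> real" where
  "aczel_log x = Sup {real_of_int m / real k | m k. k \<ge> 1 \<and> ratio_le k m x}"

lemma bdd_above_ratios:
  assumes "x \<in> I"
  shows "bdd_above {real_of_int m / real k | m k. k \<ge> 1 \<and> ratio_le k m x}"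
proof -
  obtain m1 where "\<not> ratio_le 1 m1 x"
    using not_ratio_le_exists assms by blast
  then show ?thesis
    using ratio_le_less_not_ratio_le[OF assms] by (intro bdd_aboveI[of _ "real_of_int m1"]) (force simp: less_imp_le)
qed

lemma aczel_log_ge:
  assumes "x \<in> I" "k \<ge> 1" "ratio_le k m x"
  shows "real_of_int m / real k \<le> aczel_log x"
  unfolding aczel_log_def by (rule cSup_upper[OF _ bdd_above_ratios[OF assms(1)]]) (use assms in blast)

lemma aczel_log_le:
  assumes "x \<in> I" "k \<ge> 1" "\<not> ratio_le k m x"
  shows "aczel_log x \<le> real_of_int m / real k"
  unfolding aczel_log_def
proof (rule cSup_least)
  show "{real_of_int m / real k | m k. k \<ge> 1 \<and> ratio_le k m x} \<noteq> {}"
    using ratio_le_exists[OF assms(1), of 1] by force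
qed (use ratio_le_less_not_ratio_le[OF assms(1) _ assms(2) _ assms(3)] in \<open>force simp: less_imp_le\<close>)

lemma aczel_log_approx:
  assumes "x \<in> I" "k \<ge> 1"
  obtains m where "ratio_le k m x" "\<not> ratio_le k (m + 1) x"
    "real_of_int m / real k \<le> aczel_log x" "aczel_log x \<le> real_of_int m / real k + 1 / real k"
proof -
  obtain m where m: "ratio_le k m x" "\<not> ratio_le k (m + 1) x"
    using ratio_le_step assms by blast
  have "aczel_log x \<le> real_of_int (m + 1) / real k"
    using aczel_log_le m assms by blast
  then show ?thesis
    using that m aczel_log_ge assms by (simp add: add_divide_distrib)
qed

lemma gpow_op_shift:
  assumes "x \<in> I" "y \<in> I" "k \<ge> 1" "j \<ge> 1"
  shows "(gpow x k \<odot> gpow u j) \<odot> (gpow y k \<odot> gpow u j) = gpow (x \<odot> y) k \<odot> gpow u (j + j)"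
  using op_swap_middle[of "gpow x k" "gpow u j" "gpow y k" "gpow u j"] gpow_op gpow_add[OF u_mem] assms
  by (simp add: gpow_mem u_mem)

lemma gpow_u_add_int:
  assumes "m + int j \<ge> 1" "m' + int j \<ge> 1"
  shows "gpow u (nat (m + int j)) \<odot> gpow u (nat (m' + int j)) = gpow u (nat (m + m' + int (j + j)))"
proof -
  have "nat (m + int j) + nat (m' + int j) = nat (m + m' + int (j + j))"
    using assms by simp
  then show ?thesis
    using gpow_add[OF u_mem, of "nat (m + int j)" "nat (m' + int j)"] assms by simp
qed

lemma ratio_le_op:
  assumes "x \<in> I" "y \<in> I" "k \<ge> 1" "ratio_le k m x" "ratio_le k m' y"
  shows "ratio_le k (m + m') (x \<odot> y)"
proof -
  obtain j where j: "j \<ge> 1" "m + int j \<ge> 1" "m' + int j \<ge> 1"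
    using common_shift by blast
  have "gpow u (nat (m + int j)) \<le> gpow x k \<odot> gpow u j"
    "gpow u (nat (m' + int j)) \<le> gpow y k \<odot> gpow u j"
    using ratio_le_iff_ratio_le_at j assms unfolding ratio_le_at_def by auto
  then have "gpow u (nat (m + int j)) \<odot> gpow u (nat (m' + int j))
      \<le> (gpow x k \<odot> gpow u j) \<odot> (gpow y k \<odot> gpow u j)"
    using assms u_mem by (intro op_mono) (auto intro!: closed gpow_mem)
  then have "ratio_le_at k (m + m') (x \<odot> y) (j + j)"
    unfolding ratio_le_at_def using gpow_op_shift gpow_u_add_int j assms by simp
  then show ?thesis
    unfolding ratio_le_def using j by (intro exI[of _ "j + j"]) auto
qed

lemma not_ratio_le_op:
  assumes "x \<in> I" "y \<in> I" "k \<ge> 1" "\<not> ratio_le k (m + 1) x" "\<not> ratio_le k (m' + 1) y"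
  shows "\<not> ratio_le k (m + m' + 2) (x \<odot> y)"
proof -
  obtain j where j: "j \<ge> 1" "m + 1 + int j \<ge> 1" "m' + 1 + int j \<ge> 1"
    using common_shift by blast
  have "gpow x k \<odot> gpow u j < gpow u (nat (m + 1 + int j))"
    "gpow y k \<odot> gpow u j < gpow u (nat (m' + 1 + int j))"
    using ratio_le_iff_ratio_le_at j assms unfolding ratio_le_at_def by auto
  then have "(gpow x k \<odot> gpow u j) \<odot> (gpow y k \<odot> gpow u j)
      < gpow u (nat (m + 1 + int j)) \<odot> gpow u (nat (m' + 1 + int j))"
    using assms u_mem by (intro op_strict_mono) (auto intro!: closed gpow_mem)
  moreover have "m + 1 + (m' + 1) = m + m' + 2"
    by simp
  ultimately have "\<not> ratio_le_at k (m + m' + 2) (x \<odot> y) (j + j)"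
    unfolding ratio_le_at_def using gpow_op_shift gpow_u_add_int[OF j(2,3)] j assms by simp
  moreover have "m + m' + 2 + int (j + j) \<ge> 1"
    using j by simp
  ultimately show ?thesis
    using ratio_le_iff_ratio_le_at[OF closed[OF assms(1,2)], of "j + j"] j by auto
qed

lemma real_eq_0_if_abs_le_inverse:
  fixes a :: real
  assumes "\<And>k::nat. k \<ge> 1 \<Longrightarrow> \<bar>a\<bar> \<le> 2 / real k"
  shows "a = 0"
proof (rule ccontr)
  assume "a \<noteq> 0"
  then obtain k :: nat where k: "real k > 2 / \<bar>a\<bar>"
    using reals_Archimedean2 by blast
  then have "k \<ge> 1"
    using \<open>a \<noteq> 0\<close> by (metis divide_pos_pos le_less_linear less_one not_less_iff_gr_or_eq of_nat_0
        order.strict_trans zero_less_abs_iff zero_less_numeral)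
  then show False
    using assms[of k] k \<open>a \<noteq> 0\<close> by (simp add: divide_less_eq le_divide_eq mult.commute)
qed

lemma aczel_log_op:
  assumes "x \<in> I" "y \<in> I"
  shows "aczel_log (x \<odot> y) = aczel_log x + aczel_log y"
proof -
  have "\<bar>aczel_log (x \<odot> y) - (aczel_log x + aczel_log y)\<bar> \<le> 2 / real k" if k: "k \<ge> 1" for k
  proof -
    obtain m where m: "ratio_le k m x" "\<not> ratio_le k (m + 1) x"
      "real_of_int m / real k \<le> aczel_log x" "aczel_log x \<le> real_of_int m / real k + 1 / real k"
      using aczel_log_approx[OF assms(1) k] by blast
    obtain m' where m': "ratio_le k m' y" "\<not> ratio_le k (m' + 1) y"
      "real_of_int m' / real k \<le> aczel_log y" "aczel_log y \<le> real_of_int m' / real k + 1 / real k"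
      using aczel_log_approx[OF assms(2) k] by blast
    have "real_of_int (m + m') / real k \<le> aczel_log (x \<odot> y)"
      using aczel_log_ge[OF closed[OF assms] k ratio_le_op[OF assms k m(1) m'(1)]] .
    moreover have "aczel_log (x \<odot> y) \<le> real_of_int (m + m' + 2) / real k"
      using aczel_log_le[OF closed[OF assms] k not_ratio_le_op[OF assms k m(2) m'(2)]] .
    ultimately show ?thesis
      using m(3,4) m'(3,4) by (simp add: add_divide_distrib abs_le_iff)
  qed
  then show ?thesis
    using real_eq_0_if_abs_le_inverse[of "aczel_log (x \<odot> y) - (aczel_log x + aczel_log y)"] by simp
qed

lemma aczel_log_mono:
  assumes "x \<in> I" "y \<in> I" "x \<le> y"
  shows "aczel_log x \<le> aczel_log y"
  unfolding aczel_log_def[of x]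
proof (rule cSup_least)
  show "{real_of_int m / real k | m k. k \<ge> 1 \<and> ratio_le k m x} \<noteq> {}"
    using ratio_le_exists[OF assms(1), of 1] by force
next
  fix r assume "r \<in> {real_of_int m / real k | m k. k \<ge> 1 \<and> ratio_le k m x}"
  then obtain m k where r: "r = real_of_int m / real k" "k \<ge> 1" "ratio_le k m x"
    by blast
  then obtain j where j: "j \<ge> 1" "m + int j \<ge> 1" "ratio_le_at k m x j"
    unfolding ratio_le_def by blast
  have "gpow x k \<odot> gpow u j \<le> gpow y k \<odot> gpow u j"
    using assms r gpow_mono by (intro op_mono) (auto intro: gpow_mem u_mem)
  then have "ratio_le k m y"
    using j unfolding ratio_le_def ratio_le_at_def by force
  then show "r \<le> aczel_log y"
    using aczel_log_ge r assms by simp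
qed

lemma aczel_log_u: "aczel_log u \<ge> 1"
proof -
  have "ratio_le_at 1 1 u 1"
    unfolding ratio_le_at_def using gpow_Suc[of 1 u] by (simp add: numeral_2_eq_2)
  then have "ratio_le 1 1 u"
    unfolding ratio_le_def by force
  then show ?thesis
    using aczel_log_ge[OF u_mem, of 1 1] by simp
qed

lemma aczel_log_locally_constant:
  assumes "x \<in> I" "y \<in> I" "x < y" and eq: "aczel_log x = aczel_log y" and z0: "z0 \<in> I"
  shows "eventually (\<lambda>z. aczel_log z0 = aczel_log z) (at z0 within I)"
proof -
  define d where "d = y \<odot> z0 - x \<odot> z0"
  have "d > 0"
    unfolding d_def using strict_mono_left[OF assms(1,2) z0 assms(3)] by simp
  have "\<exists>\<delta>>0. \<forall>z\<in>I. \<bar>z - z0\<bar> < \<delta> \<longrightarrow> \<bar>v \<odot> z - v \<odot> z0\<bar> < d" if "v \<in> I" for v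
    using continuous_on_op_right[OF that] z0 \<open>d > 0\<close> unfolding continuous_on_iff dist_real_def by blast
  then obtain d1 d2 where d: "d1 > 0" "d2 > 0"
    "\<forall>z\<in>I. \<bar>z - z0\<bar> < d1 \<longrightarrow> \<bar>x \<odot> z - x \<odot> z0\<bar> < d"
    "\<forall>z\<in>I. \<bar>z - z0\<bar> < d2 \<longrightarrow> \<bar>y \<odot> z - y \<odot> z0\<bar> < d"
    using assms(1,2) by meson
  \<comment> \<open>\<open>aczel_log\<close> is constant on \<open>[x \<odot> z0, y \<odot> z0]\<close>, which contains \<open>x \<odot> z\<close> or \<open>y \<odot> z\<close>\<close>
  have "aczel_log z0 = aczel_log z" if z: "z \<in> I" "\<bar>z - z0\<bar> < min d1 d2" for z
  proof (cases "z0 \<le> z")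
    case True
    then have "x \<odot> z0 \<le> x \<odot> z" "x \<odot> z \<le> y \<odot> z0"
      using le_cancel_right d(3)[rule_format, of z] assms z z0 unfolding d_def by auto
    then show ?thesis
      using aczel_log_mono[of "x \<odot> z0" "x \<odot> z"] aczel_log_mono[of "x \<odot> z" "y \<odot> z0"]
        aczel_log_op eq closed assms z z0 by force
  next
    case False
    then have "y \<odot> z \<le> y \<odot> z0" "x \<odot> z0 \<le> y \<odot> z"
      using le_cancel_right d(4)[rule_format, of z] assms z z0 unfolding d_def by auto
    then show ?thesis
      using aczel_log_mono[of "x \<odot> z0" "y \<odot> z"] aczel_log_mono[of "y \<odot> z" "y \<odot> z0"]
        aczel_log_op eq closed assms z z0 by force
  qed
  then show ?thesis
    unfolding eventually_at dist_real_def using d(1,2) by (intro exI[of _ "min d1 d2"]) auto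
qed

lemma aczel_log_strict_mono:
  assumes "x \<in> I" "y \<in> I" "x < y"
  shows "aczel_log x < aczel_log y"
proof (rule ccontr)
  assume "\<not> ?thesis"
  then have "aczel_log x = aczel_log y"
    using aczel_log_mono assms by force
  \<comment> \<open>a locally constant function on the connected \<open>I\<close> is constant, but \<open>aczel_log (u \<odot> u) = 2 aczel_log u \<noteq> aczel_log u\<close>\<close>
  then have "aczel_log u = aczel_log (u \<odot> u)"
    using aczel_log_locally_constant[OF assms]
    by (intro connected_local_const[OF is_interval_connected[OF interval] u_mem closed[OF u_mem u_mem]])
      blast
  then show False
    using aczel_log_op[OF u_mem u_mem] aczel_log_u by simp
qed

text \<open>The cuts \<open>m - 1\<close> and \<open>m + 1\<close> adjacent to the position of \<open>z0\<close> at level \<open>k\<close> are strict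
  inequalities between continuous functions of \<open>z\<close>, so they persist near \<open>z0\<close>.\<close>

lemma ratio_le_near:
  assumes z0: "z0 \<in> I" and m: "ratio_le k m z0" "\<not> ratio_le k (m + 1) z0"
  shows "\<exists>d>0. \<forall>z\<in>I. \<bar>z - z0\<bar> < d \<longrightarrow> ratio_le k (m - 1) z \<and> \<not> ratio_le k (m + 1) z"
proof -
  obtain j where j: "j \<ge> 1" "m - 1 + int j \<ge> 1" "m + 1 + int j \<ge> 1"
    using common_shift by blast
  define h where "h z = gpow z k \<odot> gpow u j" for z
  define lo where "lo = gpow u (nat (m - 1 + int j))"
  define hi where "hi = gpow u (nat (m + 1 + int j))"
  have "lo < gpow u (nat (m + int j))"
    unfolding lo_def using j by (intro gpow_u_strict_mono) auto
  also have "\<dots> \<le> h z0"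
    using ratio_le_iff_ratio_le_at[OF z0, of j m k] m j unfolding ratio_le_at_def h_def by simp
  finally have "h z0 - lo > 0"
    by simp
  moreover have "hi - h z0 > 0"
    using ratio_le_iff_ratio_le_at[OF z0, of j "m + 1" k] m j unfolding ratio_le_at_def h_def hi_def by simp
  moreover have "continuous_on I h"
    unfolding h_def by (rule continuous_on_op[OF continuous_on_gpow continuous_on_const])
      (auto simp: gpow_mem u_mem)
  ultimately obtain d where "d > 0" "\<forall>z\<in>I. \<bar>z - z0\<bar> < d \<longrightarrow> \<bar>h z - h z0\<bar> < min (h z0 - lo) (hi - h z0)"
    using z0 unfolding continuous_on_iff dist_real_def by (metis min_less_iff_conj)
  then show ?thesis
    using ratio_le_iff_ratio_le_at[OF _ j(1,2), of _ k] ratio_le_iff_ratio_le_at[OF _ j(1,3), of _ k]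
    unfolding ratio_le_at_def h_def lo_def hi_def by (intro exI[of _ d]) auto
qed

lemma continuous_on_aczel_log: "continuous_on I aczel_log"
  unfolding continuous_on_iff dist_real_def
proof (intro ballI allI impI)
  fix z0 e :: real
  assume z0: "z0 \<in> I" and e: "e > 0"
  obtain k :: nat where k: "real k > 2 / e"
    using reals_Archimedean2 by blast
  moreover have "2 / e > 0"
    using e by simp
  ultimately have k1: "k \<ge> 1"
    by (metis less_one not_le of_nat_0 order_less_asym')
  have ke: "2 * (1 / real k) < e"
    using k e k1 by (simp add: divide_less_eq mult.commute)
  obtain m where m: "ratio_le k m z0" "\<not> ratio_le k (m + 1) z0"
      "real_of_int m / real k \<le> aczel_log z0" "aczel_log z0 \<le> real_of_int m / real k + 1 / real k"
    using aczel_log_approx[OF z0 k1] by blast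
  obtain d where d: "d > 0" "\<forall>z\<in>I. \<bar>z - z0\<bar> < d \<longrightarrow> ratio_le k (m - 1) z \<and> \<not> ratio_le k (m + 1) z"
    using ratio_le_near[OF z0 m(1,2)] by blast
  show "\<exists>d>0. \<forall>z\<in>I. \<bar>z - z0\<bar> < d \<longrightarrow> \<bar>aczel_log z - aczel_log z0\<bar> < e"
  proof (intro exI[of _ d] conjI ballI impI)
    fix z assume z: "z \<in> I" "\<bar>z - z0\<bar> < d"
    then have "real_of_int (m - 1) / real k \<le> aczel_log z"
      using aczel_log_ge k1 d(2) by blast
    then have lower: "real_of_int m / real k - 1 / real k \<le> aczel_log z"
      by (simp add: diff_divide_distrib)
    have "aczel_log z \<le> real_of_int (m + 1) / real k"
      using aczel_log_le z k1 d(2) by blast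
    then have upper: "aczel_log z \<le> real_of_int m / real k + 1 / real k"
      by (simp add: add_divide_distrib)
    show "\<bar>aczel_log z - aczel_log z0\<bar> < e"
      using lower upper m(3,4) ke by (simp add: abs_less_iff)
  qed (rule d(1))
qed

lemma exists_additive_representation:
  "\<exists>\<psi> :: real \<Rightarrow> real. continuous_on I \<psi> \<and> strict_mono_on I \<psi> \<and> (\<forall>x\<in>I. \<forall>y\<in>I. \<psi> (x \<odot> y) = \<psi> x + \<psi> y)"
proof -
  have "strict_mono_on I aczel_log"
    by (auto intro: monotone_onI aczel_log_strict_mono)
  then show ?thesis
    using continuous_on_aczel_log aczel_log_op by blast
qed

end

context interval_semigroup
begin

lemma reflected: "interval_semigroup (uminus ` I) (\<lambda>x y. - ((- x) \<odot> (- y)))"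
proof
  have mem: "x \<in> uminus ` I \<longleftrightarrow> - x \<in> I" for x
    by force
  show "is_interval (uminus ` I)"
    using interval by simp
  show "\<exists>x\<in>uminus ` I. \<exists>y\<in>uminus ` I. x < y"
  proof -
    obtain x y where "x \<in> I" "y \<in> I" "x < y"
      using nontrivial by blast
    then show ?thesis
      by (intro bexI[of _ "- y"] bexI[of _ "- x"]) auto
  qed
  have "continuous_on (uminus ` I \<times> uminus ` I) (\<lambda>p. (- fst p) \<odot> (- snd p))"
    by (rule continuous_on_op) (auto intro!: continuous_intros simp: mem)
  then show "continuous_on (uminus ` I \<times> uminus ` I) (\<lambda>(x, y). - ((- x) \<odot> (- y)))"
    by (simp add: case_prod_beta continuous_on_minus)
  fix x y z
  assume x: "x \<in> uminus ` I" and y: "y \<in> uminus ` I"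
  then show "- ((- x) \<odot> (- y)) \<in> uminus ` I"
    by (simp add: mem closed)
  show "- ((- x) \<odot> (- y)) = - ((- y) \<odot> (- x))"
    using x y commute by (simp add: mem)
  assume z: "z \<in> uminus ` I"
  show "- ((- (- ((- x) \<odot> (- y)))) \<odot> (- z)) = - ((- x) \<odot> (- (- ((- y) \<odot> (- z)))))"
    using x y z assoc by (simp add: mem)
  show "- ((- x) \<odot> (- z)) = - ((- y) \<odot> (- z)) \<Longrightarrow> x = y"
    using x y z cancel[of "- x" "- y" "- z"] by (simp add: mem)
qed

text \<open>An idempotent \<open>a = a \<odot> a\<close> is neutral by cancellation, so at most one point of \<open>I\<close> is
  idempotent; a non-idempotent \<open>u\<close> moves every point of \<open>I\<close> in the same direction.\<close>

lemma exists_shift: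
  obtains u where "u \<in> I" "(\<forall>z\<in>I. z < z \<odot> u) \<or> (\<forall>z\<in>I. z \<odot> u < z)"
proof -
  have neutral: "a \<odot> w = w" if "a \<in> I" "w \<in> I" "a \<odot> a = a" for a w
    using cancel[of "a \<odot> w" w a] assoc[of a a w] that closed commute by metis
  obtain a b where ab: "a \<in> I" "b \<in> I" "a < b"
    using nontrivial by blast
  then obtain u where u: "u \<in> I" "u \<odot> u \<noteq> u"
    using neutral[of a b] neutral[of b a] commute by force
  have moved: "z \<odot> u \<noteq> z" if "z \<in> I" for z
  proof
    assume "z \<odot> u = z"
    then have "(u \<odot> u) \<odot> z = u \<odot> z"
      using assoc commute that u closed by metis
    then show False
      using cancel closed that u by blast
  qed
  have "z < z \<odot> u \<longleftrightarrow> u < u \<odot> u" if "z \<in> I" for z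
    using connected_nonvanishing_sign[of I "\<lambda>z. z \<odot> u - z" z u] moved that u
      continuous_on_diff[OF continuous_on_op_left[OF u(1)] continuous_on_id]
    by (auto simp: is_interval_connected[OF interval])
  then show ?thesis
    using that[OF u(1)] moved u by (metis linorder_neqE_linordered_idom)
qed

theorem additive_representation:
  obtains \<psi> :: "real \<Rightarrow> real" where "continuous_on I \<psi>" "strict_mono_on I \<psi>"
    "\<And>x y. x \<in> I \<Longrightarrow> y \<in> I \<Longrightarrow> \<psi> (x \<odot> y) = \<psi> x + \<psi> y"
proof -
  obtain u where u: "u \<in> I" and dir: "(\<forall>z\<in>I. z < z \<odot> u) \<or> (\<forall>z\<in>I. z \<odot> u < z)"
    using exists_shift by blast
  show ?thesis
  proof (cases "\<forall>z\<in>I. z < z \<odot> u")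
    case True
    have "aczel_construction I g u"
      by (rule aczel_construction.intro[OF interval_semigroup_axioms aczel_construction_axioms.intro])
        (use u True in blast)+
    then show ?thesis
      using that aczel_construction.exists_additive_representation by blast
  next
    case False
    then have down: "z \<odot> u < z" if "z \<in> I" for z
      using dir that by blast
    have "aczel_construction (uminus ` I) (\<lambda>x y. - ((- x) \<odot> (- y))) (- u)"
      by (rule aczel_construction.intro[OF reflected aczel_construction_axioms.intro])
        (use u down in force)+
    then obtain \<psi> :: "real \<Rightarrow> real" where \<psi>: "continuous_on (uminus ` I) \<psi>" "strict_mono_on (uminus ` I) \<psi>"
      "\<forall>x\<in>uminus ` I. \<forall>y\<in>uminus ` I. \<psi> (- ((- x) \<odot> (- y))) = \<psi> x + \<psi> y"
      by (auto dest: aczel_construction.exists_additive_representation)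
    have mem: "x \<in> uminus ` I \<longleftrightarrow> - x \<in> I" for x
      by force
    show ?thesis
    proof (rule that[of "\<lambda>x. - \<psi> (- x)"])
      show "continuous_on I (\<lambda>x. - \<psi> (- x))"
        by (intro continuous_on_minus continuous_on_compose2[OF \<psi>(1)]) (auto intro!: continuous_intros)
      show "strict_mono_on I (\<lambda>x. - \<psi> (- x))"
        using \<psi>(2) unfolding monotone_on_def mem by force
      show "- \<psi> (- (x \<odot> y)) = - \<psi> (- x) + - \<psi> (- y)" if "x \<in> I" "y \<in> I" for x y
        using \<psi>(3) that by (simp add: mem)
    qed
  qed
qed

end

section \<open>Admissible target intervals\<close>

lemma admissible_J_add: "admissible_J J \<Longrightarrow> p \<in> J \<Longrightarrow> q \<in> J \<Longrightarrow> p + q \<in> J"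
  unfolding admissible_J_def by auto

lemma admissible_J_sum_list:
  assumes "admissible_J J" "ys \<noteq> []" "set ys \<subseteq> J"
  shows "sum_list ys \<in> J"
  using assms(2,3)
proof (induction ys)
  case (Cons y ys)
  then show ?case
    using admissible_J_add[OF assms(1)] by (cases "ys = []") auto
qed simp

lemma admissible_J_cases:
  assumes "admissible_J J"
  obtains (lessThan) b where "b \<le> 0" "J = {..<b}" | (atMost) b where "b \<le> 0" "J = {..b}"
    | (greaterThan) a where "a \<ge> 0" "J = {a<..}" | (atLeast) a where "a \<ge> 0" "J = {a..}"
    | (UNIV) "J = UNIV"
  using assms unfolding admissible_J_def by blast

lemma admissible_J_uminus:
  assumes "admissible_J J"
  shows "admissible_J (uminus ` J)"
  using assms
proof (cases rule: admissible_J_cases)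
  case (lessThan b)
  then have "uminus ` J = {- b<..}" "- b \<ge> 0"
    by simp_all
  then show ?thesis
    unfolding admissible_J_def by blast
next
  case (atMost b)
  then have "uminus ` J = {- b..}" "- b \<ge> 0"
    by simp_all
  then show ?thesis
    unfolding admissible_J_def by blast
next
  case (greaterThan a)
  then have "uminus ` J = {..<- a}" "- a \<le> 0"
    by simp_all
  then show ?thesis
    unfolding admissible_J_def by blast
next
  case (atLeast a)
  then have "uminus ` J = {..- a}" "- a \<le> 0"
    by simp_all
  then show ?thesis
    unfolding admissible_J_def by blast
qed (simp add: admissible_J_def)

lemma not_bdd_above_greaterThan: "\<not> bdd_above {a<..}" for a :: real
proof
  assume "bdd_above {a<..}"
  then obtain M where "\<forall>x>a. x \<le> M"
    unfolding bdd_above_def by auto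
  moreover have "a < max a M + 1"
    by (simp add: max_def)
  ultimately have "max a M + 1 \<le> M"
    by blast
  then show False
    by (simp add: max_def split: if_splits)
qed

lemma not_bdd_below_lessThan: "\<not> bdd_below {..<b}" for b :: real
  using not_bdd_above_greaterThan[of "- b"] bdd_above_uminus[of "{..<b}"] by simp

lemma admissible_J_unbounded:
  assumes "admissible_J J"
  shows "\<not> bdd_above J \<or> \<not> bdd_below J"
  using assms
proof (cases rule: admissible_J_cases)
  case (atMost b)
  then show ?thesis
    using bdd_below_mono[of "{..b}" "{..<b}"] not_bdd_below_lessThan[of b] by (auto simp: subset_eq)
next
  case (atLeast a)
  then show ?thesis
    using bdd_above_mono[of "{a..}" "{a<..}"] not_bdd_above_greaterThan[of a] by (auto simp: subset_eq)
next
  case UNIV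
  then show ?thesis
    using bdd_above_mono[of UNIV "{0<..}"] not_bdd_above_greaterThan[of 0] by auto
qed (use not_bdd_above_greaterThan not_bdd_below_lessThan in auto)

lemma scaling_closed_not_bdd_above:
  fixes J :: "real set"
  assumes "c > 1" "\<And>q. q \<in> J \<Longrightarrow> c * q \<in> J" "p \<in> J" "p > 0"
  shows "\<not> bdd_above J"
proof
  assume "bdd_above J"
  then obtain M where M: "\<forall>q\<in>J. q \<le> M"
    unfolding bdd_above_def by blast
  have scaled: "c ^ k * p \<in> J" for k
    by (induction k) (use assms(2,3) in \<open>auto simp: mult.assoc\<close>)
  obtain k where "M / p < c ^ k"
    using real_arch_pow[OF assms(1)] by blast
  then have "M < c ^ k * p"
    using assms(4) by (simp add: divide_less_eq)
  then show False
    using M scaled[of k] by (meson not_le)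
qed

lemma admissible_J_if_scaling_closed:
  fixes J :: "real set" and c :: real
  assumes interval: "is_interval J" and nontrivial: "\<exists>p\<in>J. \<exists>q\<in>J. p < q"
    and c: "c > 1" and scaling: "\<And>p. p \<in> J \<Longrightarrow> c * p \<in> J"
  shows "admissible_J J"
proof -
  have nonpos: "p \<le> 0" if "p \<in> J" "bdd_above J" for p
    using scaling_closed_not_bdd_above[OF c scaling] that by force
  have "\<not> bdd_above (uminus ` J)" if "p \<in> J" "p < 0" for p
    using scaling_closed_not_bdd_above[OF c, of "uminus ` J" "- p"] scaling that by force
  then have nonneg: "p \<ge> 0" if "p \<in> J" "bdd_below J" for p
    using that by force
  have not_bounded: "\<not> (bdd_above J \<and> bdd_below J)"
    using nontrivial nonpos nonneg by force
  obtain l r where "J = {} \<or> J = UNIV \<or> J = {..<r} \<or> J = {..r} \<or> J = {l<..} \<or> J = {l..} \<or>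
      J = {l<..<r} \<or> J = {l<..r} \<or> J = {l..<r} \<or> J = {l..r}"
    using is_real_interval[OF interval] by blast
  then show ?thesis
  proof (elim disjE)
    assume J: "J = {..<r}"
    then have "r \<le> 0"
      using nonpos[of "r / 2"] by (cases "r > 0") auto
    then show ?thesis
      unfolding admissible_J_def using J by blast
  next
    assume J: "J = {..r}"
    then have "r \<le> 0"
      using nonpos[of r] by simp
    then show ?thesis
      unfolding admissible_J_def using J by blast
  next
    assume J: "J = {l<..}"
    then have "l \<ge> 0"
      using nonneg[of "l / 2"] by (cases "l < 0") auto
    then show ?thesis
      unfolding admissible_J_def using J by blast
  next
    assume J: "J = {l..}"
    then have "l \<ge> 0"
      using nonneg[of l] by simp
    then show ?thesis
      unfolding admissible_J_def using J by blast
  qed (use nontrivial not_bounded in \<open>auto simp: admissible_J_def\<close>)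
qed

section \<open>From an n-ary semigroup to a binary one\<close>

lemma tuples_iff: "xs \<in> tuples I n \<longleftrightarrow> length xs = n \<and> (\<forall>i<n. xs ! i \<in> I)"
  unfolding tuples_def by (auto simp: set_conv_nth)

lemma list_update_in_tuples: "xs \<in> tuples I n \<Longrightarrow> v \<in> I \<Longrightarrow> xs[k := v] \<in> tuples I n"
  unfolding tuples_def by (auto dest: set_update_subset_insert[THEN subsetD])

lemma permuted_in_tuples:
  assumes "xs \<in> tuples I n" "\<sigma> permutes {..<n}"
  shows "map (\<lambda>i. xs ! \<sigma> i) [0..<n] \<in> tuples I n"
  using assms permutes_in_image[OF assms(2)] unfolding tuples_iff by auto

lemma sum_list_map_update:
  fixes h :: "'a \<Rightarrow> real"
  shows "k < length xs \<Longrightarrow> sum_list (map h (xs[k := v])) + h (xs ! k) = sum_list (map h xs) + h v"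
  by (induction xs arbitrary: k) (auto split: nat.split)

locale nary_semigroup =
  fixes I :: "real set" and n :: nat and f :: "real list \<Rightarrow> real" and a :: real
  assumes interval: "is_interval I"
    and nontrivial: "\<exists>x\<in>I. \<exists>y\<in>I. x < y"
    and arity: "n \<ge> 2"
    and maps_into: "maps_into I n f"
    and continuous: "continuous_nary I n f"
    and symmetric: "symmetric_nary I n f"
    and cancellative: "cancellative_nary I n f"
    and associative: "associative_nary I n f"
    and a_mem: "a \<in> I"
begin

definition op :: "real \<Rightarrow> real \<Rightarrow> real" (infixl "\<odot>" 70) where
  "x \<odot> y = f ([x, y] @ replicate (n - 2) a)"

lemma pair_in_tuples: "x \<in> I \<Longrightarrow> y \<in> I \<Longrightarrow> [x, y] @ replicate (n - 2) a \<in> tuples I n"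
  unfolding tuples_def using arity a_mem by auto

lemma f_mem: "xs \<in> tuples I n \<Longrightarrow> f xs \<in> I"
  using maps_into unfolding maps_into_def by blast

lemma op_mem: "x \<in> I \<Longrightarrow> y \<in> I \<Longrightarrow> x \<odot> y \<in> I"
  unfolding op_def using f_mem pair_in_tuples by blast

lemma inner_f_position_irrelevant:
  assumes "W \<in> tuples I (2 * n - 1)" "i \<le> n - 1"
  shows "f (take i W @ [f (take n (drop i W))] @ drop (i + n) W) = f ([f (take n W)] @ drop n W)"
  using assms(2)
proof (induction i)
  case (Suc i)
  then have "i < n - 1"
    by simp
  then have "f (take i W @ [f (take n (drop i W))] @ drop (i + n) W)
      = f (take (Suc i) W @ [f (take n (drop (Suc i) W))] @ drop (Suc i + n) W)"
    using associative assms(1) unfolding associative_nary_def by blast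
  then show ?case
    using Suc by simp
qed simp

lemma f_op_last:
  assumes xs: "xs \<in> tuples I n" and y: "y \<in> I"
  shows "f (butlast xs @ [last xs \<odot> y]) = f xs \<odot> y"
proof -
  have len: "length xs = n" and xs_mem: "set xs \<subseteq> I"
    using xs unfolding tuples_def by auto
  then obtain ys z where xs_eq: "xs = ys @ [z]"
    using arity by (metis le_zero_eq list.size(3) rev_exhaust zero_neq_numeral)
  define W where "W = xs @ [y] @ replicate (n - 2) a"
  have "W \<in> tuples I (2 * n - 1)"
    unfolding W_def tuples_def using len xs_mem y a_mem arity by auto
  from inner_f_position_irrelevant[OF this, of "n - 1"]
  have "f (take (n - 1) W @ [f (take n (drop (n - 1) W))] @ drop (n - 1 + n) W) = f ([f xs] @ drop n W)"
    unfolding W_def using len by simp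
  moreover have "take (n - 1) W = butlast xs" "take n (drop (n - 1) W) = [last xs, y] @ replicate (n - 2) a"
    "drop (n - 1 + n) W = []" "drop n W = [y] @ replicate (n - 2) a"
    unfolding W_def xs_eq using len arity xs_eq by auto
  ultimately show ?thesis
    unfolding op_def by simp
qed

lemma f_op_update:
  assumes xs: "xs \<in> tuples I n" and k: "k < n" and y: "y \<in> I"
  shows "f (xs[k := xs ! k \<odot> y]) = f xs \<odot> y"
proof -
  have len: "length xs = n"
    using xs unfolding tuples_def by simp
  \<comment> \<open>by symmetry, the \<open>k\<close>-th argument may be moved to the last position\<close>
  define \<tau> where "\<tau> = Transposition.transpose k (n - 1)"
  have \<tau>: "\<tau> permutes {..<n}"
    unfolding \<tau>_def using k arity by (intro permutes_swap_id) auto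
  define permute where "permute zs = map (\<lambda>i. zs ! \<tau> i) [0..<n]" for zs :: "real list"
  have f_permute: "f (permute zs) = f zs" if "zs \<in> tuples I n" for zs
    using symmetric that \<tau> unfolding symmetric_nary_def permute_def by blast
  define v where "v = xs ! k \<odot> y"
  have "v \<in> I"
    unfolding v_def using op_mem xs k y unfolding tuples_iff by simp
  have \<tau>_last: "\<tau> (n - 1) = k" and \<tau>_other: "i < n - 1 \<Longrightarrow> \<tau> i \<noteq> k" for i
    using k unfolding \<tau>_def by (auto simp: Transposition.transpose_def)
  have \<tau>_less: "\<tau> i < n" if "i < n" for i
    using permutes_in_image[OF \<tau>] that by simp
  have "permute (xs[k := v]) = butlast (permute xs) @ [v]"
  proof (rule nth_equalityI)
    fix i assume "i < length (permute (xs[k := v]))"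
    then have "i < n"
      by (simp add: permute_def)
    then show "permute (xs[k := v]) ! i = (butlast (permute xs) @ [v]) ! i"
      using \<tau>_last \<tau>_other[of i] \<tau>_less[of i] len k arity
      by (cases "i = n - 1") (auto simp: permute_def nth_append nth_butlast)
  qed (use arity in \<open>simp add: permute_def\<close>)
  moreover have "last (permute xs) = xs ! k"
    unfolding permute_def using arity \<tau>_last by (simp add: last_conv_nth)
  ultimately have "f (xs[k := v]) = f (butlast (permute xs) @ [last (permute xs) \<odot> y])"
    using f_permute[of "xs[k := v]"] list_update_in_tuples[OF xs \<open>v \<in> I\<close>] unfolding v_def by simp
  also have "\<dots> = f xs \<odot> y"
    using f_op_last[OF permuted_in_tuples[OF xs \<tau>] y] f_permute[OF xs] unfolding permute_def by simp
  finally show ?thesis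
    unfolding v_def .
qed

lemma op_commute:
  assumes "x \<in> I" "y \<in> I"
  shows "x \<odot> y = y \<odot> x"
proof -
  define \<tau> where "\<tau> = Transposition.transpose (0::nat) 1"
  have "\<tau> permutes {..<n}"
    unfolding \<tau>_def using arity by (intro permutes_swap_id) auto
  then have "f (map (\<lambda>i. ([x, y] @ replicate (n - 2) a) ! \<tau> i) [0..<n]) = x \<odot> y"
    using symmetric pair_in_tuples[OF assms] unfolding symmetric_nary_def op_def by blast
  moreover have "map (\<lambda>i. ([x, y] @ replicate (n - 2) a) ! \<tau> i) [0..<n] = [y, x] @ replicate (n - 2) a"
    by (rule nth_equalityI)
      (use arity in \<open>auto simp: \<tau>_def Transposition.transpose_def nth_append nth_Cons split: nat.split\<close>)
  ultimately show ?thesis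
    unfolding op_def by simp
qed

lemma op_assoc: "x \<in> I \<Longrightarrow> y \<in> I \<Longrightarrow> z \<in> I \<Longrightarrow> x \<odot> y \<odot> z = x \<odot> (y \<odot> z)"
  using f_op_update[OF pair_in_tuples, of x y 1 z] arity by (simp add: op_def)

lemma op_cancel:
  assumes "x \<in> I" "y \<in> I" "z \<in> I" "x \<odot> z = y \<odot> z"
  shows "x = y"
  using cancellative pair_in_tuples[OF assms(1,3)] pair_in_tuples[OF assms(2,3)] assms(4) arity
  unfolding cancellative_nary_def op_def by (force simp: nth_Cons split: nat.split)

lemma op_continuous: "continuous_on (I \<times> I) (\<lambda>(x, y). x \<odot> y)"
  unfolding continuous_on_iff
proof (intro ballI allI impI)
  fix p0 :: "real \<times> real" and e :: real
  assume "p0 \<in> I \<times> I" "0 < e"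
  then obtain x0 y0 where p0: "p0 = (x0, y0)" "x0 \<in> I" "y0 \<in> I"
    by auto
  then obtain d where d: "d > 0" "\<forall>ys\<in>tuples I n.
      (\<forall>i<n. \<bar>ys ! i - ([x0, y0] @ replicate (n - 2) a) ! i\<bar> < d) \<longrightarrow> \<bar>f ys - x0 \<odot> y0\<bar> < e"
    using continuous pair_in_tuples \<open>0 < e\<close> unfolding continuous_nary_def op_def by blast
  show "\<exists>d>0. \<forall>p\<in>I \<times> I. dist p p0 < d \<longrightarrow> dist (case p of (x, y) \<Rightarrow> x \<odot> y) (case p0 of (x, y) \<Rightarrow> x \<odot> y) < e"
  proof (intro exI[of _ d] conjI ballI impI)
    fix p assume p: "p \<in> I \<times> I" "dist p p0 < d"
    then obtain x y where xy: "p = (x, y)" "x \<in> I" "y \<in> I"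
      by auto
    have "dist x x0 < d" "dist y y0 < d"
      using p xy p0 dist_fst_le[of p p0] dist_snd_le[of p p0] by auto
    then have "\<forall>i<n. \<bar>([x, y] @ replicate (n - 2) a) ! i - ([x0, y0] @ replicate (n - 2) a) ! i\<bar> < d"
      using d(1) by (auto simp: nth_append nth_Cons dist_real_def split: nat.splits)
    then show "dist (case p of (x, y) \<Rightarrow> x \<odot> y) (case p0 of (x, y) \<Rightarrow> x \<odot> y) < e"
      using d(2) pair_in_tuples[OF xy(2,3)] unfolding xy p0 op_def dist_real_def by simp
  qed (rule d(1))
qed

lemma interval_semigroup: "interval_semigroup I (\<odot>)"
  using interval nontrivial op_mem op_commute op_assoc op_cancel op_continuous
  by unfold_locales blast+

end

context nary_semigroup
begin

definition defect :: "(real \<Rightarrow> real) \<Rightarrow> real list \<Rightarrow> real" where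
  "defect \<psi> xs = \<psi> (f xs) - sum_list (map \<psi> xs)"

context
  fixes \<psi> :: "real \<Rightarrow> real"
  assumes additive: "\<And>x y. x \<in> I \<Longrightarrow> y \<in> I \<Longrightarrow> \<psi> (x \<odot> y) = \<psi> x + \<psi> y"
begin

lemma defect_op_update:
  assumes xs: "xs \<in> tuples I n" and k: "k < n" and y: "y \<in> I"
  shows "defect \<psi> (xs[k := xs ! k \<odot> y]) = defect \<psi> xs"
proof -
  have "xs ! k \<in> I" "length xs = n"
    using xs k unfolding tuples_iff by auto
  then have "sum_list (map \<psi> (xs[k := xs ! k \<odot> y])) = sum_list (map \<psi> xs) + \<psi> y"
    using sum_list_map_update[of k xs \<psi> "xs ! k \<odot> y"] additive y k by simp
  moreover have "\<psi> (f (xs[k := xs ! k \<odot> y])) = \<psi> (f xs) + \<psi> y"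
    using f_op_update[OF xs k y] additive f_mem[OF xs] y by simp
  ultimately show ?thesis
    unfolding defect_def by simp
qed

lemma defect_op_map:
  assumes xs: "xs \<in> tuples I n" and ys: "ys \<in> tuples I n"
  shows "defect \<psi> (map (\<lambda>i. xs ! i \<odot> ys ! i) [0..<n]) = defect \<psi> xs"
proof -
  define zs where "zs m = map (\<lambda>i. if i < m then xs ! i \<odot> ys ! i else xs ! i) [0..<n]" for m
  have mem: "xs ! i \<in> I" "ys ! i \<in> I" if "i < n" for i
    using xs ys that unfolding tuples_iff by auto
  have "defect \<psi> (zs m) = defect \<psi> xs" if "m \<le> n" for m
    using that
  proof (induction m)
    case 0
    have "zs 0 = xs"
      using xs map_nth[of xs] unfolding zs_def tuples_def by simp
    then show ?case by simp
  next
    case (Suc m)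
    have "zs m \<in> tuples I n"
      unfolding zs_def tuples_iff using mem op_mem by auto
    moreover have "zs (Suc m) = (zs m)[m := zs m ! m \<odot> ys ! m]"
      unfolding zs_def using Suc.prems by (intro nth_equalityI) (auto simp: nth_list_update)
    ultimately show ?case
      using defect_op_update[of "zs m" m "ys ! m"] mem Suc by simp
  qed
  from this[of n] have "defect \<psi> (zs n) = defect \<psi> xs"
    by simp
  moreover have "zs n = map (\<lambda>i. xs ! i \<odot> ys ! i) [0..<n]"
    unfolding zs_def by (rule map_cong) auto
  ultimately show ?thesis
    by simp
qed

text \<open>The coordinatewise products of \<open>xs\<close> and \<open>a, \<dots>, a\<close> in either order coincide, and each
  has the defect of its first factor.\<close>

lemma defect_constant:
  assumes "xs \<in> tuples I n"
  shows "defect \<psi> xs = defect \<psi> (replicate n a)"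
proof -
  have a: "replicate n a \<in> tuples I n"
    unfolding tuples_def using a_mem by auto
  have "defect \<psi> xs = defect \<psi> (map (\<lambda>i. xs ! i \<odot> replicate n a ! i) [0..<n])"
    using defect_op_map[OF assms a] by simp
  also have "map (\<lambda>i. xs ! i \<odot> replicate n a ! i) [0..<n] = map (\<lambda>i. replicate n a ! i \<odot> xs ! i) [0..<n]"
    by (rule map_cong) (use op_commute assms a_mem in \<open>auto simp: tuples_iff\<close>)
  also have "defect \<psi> \<dots> = defect \<psi> (replicate n a)"
    using defect_op_map[OF a assms] .
  finally show ?thesis .
qed

end

lemma exists_additive_nary_representation:
  obtains \<phi> :: "real \<Rightarrow> real" where "continuous_on I \<phi>" "strict_mono_on I \<phi>"
    "\<And>xs. xs \<in> tuples I n \<Longrightarrow> \<phi> (f xs) = sum_list (map \<phi> xs)"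
proof -
  obtain \<psi> :: "real \<Rightarrow> real" where \<psi>: "continuous_on I \<psi>" "strict_mono_on I \<psi>"
    and additive: "\<And>x y. x \<in> I \<Longrightarrow> y \<in> I \<Longrightarrow> \<psi> (x \<odot> y) = \<psi> x + \<psi> y"
    using interval_semigroup.additive_representation[OF interval_semigroup] by blast
  \<comment> \<open>the constant defect \<open>D\<close> is absorbed by the shift \<open>\<psi> + D / (n - 1)\<close>\<close>
  define c where "c = defect \<psi> (replicate n a) / (real n - 1)"
  show ?thesis
  proof (rule that[of "\<lambda>x. \<psi> x + c"])
    show "continuous_on I (\<lambda>x. \<psi> x + c)"
      using \<psi>(1) by (intro continuous_intros)
    show "strict_mono_on I (\<lambda>x. \<psi> x + c)"
      using \<psi>(2) unfolding monotone_on_def by simp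
    fix xs assume xs: "xs \<in> tuples I n"
    have "length xs = n"
      using xs unfolding tuples_def by simp
    then have "sum_list (map (\<lambda>x. \<psi> x + c) xs) = sum_list (map \<psi> xs) + real n * c"
      by (induction xs arbitrary: n) (auto simp: algebra_simps)
    moreover have "defect \<psi> (replicate n a) + c = real n * c"
      unfolding c_def using arity by (simp add: field_simps)
    ultimately show "\<psi> (f xs) + c = sum_list (map (\<lambda>x. \<psi> x + c) xs)"
      using defect_constant[OF additive xs] unfolding defect_def by simp
  qed
qed

lemma exists_representation: "\<exists>\<phi> J. represents I n f \<phi> J \<and> strict_mono_on I \<phi>"
proof -
  obtain \<phi> :: "real \<Rightarrow> real" where cont: "continuous_on I \<phi>" and mono: "strict_mono_on I \<phi>"
    and additive: "\<And>xs. xs \<in> tuples I n \<Longrightarrow> \<phi> (f xs) = sum_list (map \<phi> xs)"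
    using exists_additive_nary_representation by blast
  have inj: "inj_on \<phi> I"
    using mono by (rule strict_mono_on_imp_inj_on)
  have "is_interval (\<phi> ` I)"
    using connected_continuous_image[OF cont is_interval_connected[OF interval]]
    by (simp add: is_interval_connected_1)
  moreover have "\<exists>p\<in>\<phi> ` I. \<exists>q\<in>\<phi> ` I. p < q"
    using nontrivial mono unfolding monotone_on_def by blast
  moreover have "real n > 1"
    using arity by simp
  moreover have "real n * p \<in> \<phi> ` I" if p: "p \<in> \<phi> ` I" for p
  proof -
    obtain x where x: "x \<in> I" "p = \<phi> x"
      using p by blast
    then have "replicate n x \<in> tuples I n"
      unfolding tuples_def by auto
    moreover have "sum_list (map \<phi> (replicate n x)) = real n * p"
      using x by (simp add: sum_list_replicate)
    ultimately show ?thesis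
      using additive f_mem by (metis image_eqI)
  qed
  ultimately have "admissible_J (\<phi> ` I)"
    by (rule admissible_J_if_scaling_closed)
  moreover have "f xs = inv_into I \<phi> (sum_list (map \<phi> xs))" if "xs \<in> tuples I n" for xs
    using inv_into_f_f[OF inj f_mem[OF that]] additive[OF that] by simp
  ultimately have "represents I n f \<phi> (\<phi> ` I)"
    unfolding represents_def using cont inj by (simp add: bij_betw_def)
  then show ?thesis
    using mono by blast
qed

end

section \<open>Functions of the form \<open>\<phi>\<^sup>-\<^sup>1(\<Sum> \<phi>(x\<^sub>i))\<close>\<close>

lemma represents_values:
  assumes rep: "represents I n f \<phi> J" and n: "n \<ge> 1" and xs: "xs \<in> tuples I n"
  shows "f xs \<in> I" "\<phi> (f xs) = sum_list (map \<phi> xs)"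
proof -
  have adm: "admissible_J J" and bij: "bij_betw \<phi> I J"
    and f_eq: "f xs = inv_into I \<phi> (sum_list (map \<phi> xs))"
    using rep xs unfolding represents_def by auto
  have "set (map \<phi> xs) \<subseteq> J" "map \<phi> xs \<noteq> []"
    using xs bij n unfolding tuples_def bij_betw_def by auto
  then have "sum_list (map \<phi> xs) \<in> J"
    using admissible_J_sum_list[OF adm] by blast
  then show "f xs \<in> I" "\<phi> (f xs) = sum_list (map \<phi> xs)"
    unfolding f_eq using bij by (auto simp: bij_betw_def inv_into_into f_inv_into_f)
qed

lemma represents_uminus:
  assumes "represents I n f \<phi> J"
  shows "represents I n f (\<lambda>x. - \<phi> x) (uminus ` J)"
proof -
  have "bij_betw (\<lambda>x. - \<phi> x) I (uminus ` J)"
    using bij_betw_trans[of \<phi> I J uminus "uminus ` J"] assms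
    unfolding represents_def by (auto simp: comp_def bij_betw_def inj_on_def)
  moreover have "sum_list (map (\<lambda>x. - \<phi> x) xs) = - sum_list (map \<phi> xs)" for xs
    by (induction xs) auto
  ultimately show ?thesis
    using assms admissible_J_uminus unfolding represents_def
    by (auto intro: continuous_on_minus simp: inv_into_def)
qed

lemma sum_list_map_approx:
  fixes \<phi> :: "real \<Rightarrow> real"
  assumes cont: "continuous_on I \<phi>"
  shows "set xs \<subseteq> I \<Longrightarrow> e > 0 \<Longrightarrow> \<exists>d>0. \<forall>ys. length ys = length xs \<and> set ys \<subseteq> I \<and>
     (\<forall>i<length xs. \<bar>ys ! i - xs ! i\<bar> < d) \<longrightarrow> \<bar>sum_list (map \<phi> ys) - sum_list (map \<phi> xs)\<bar> < e"
proof (induction xs arbitrary: e)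
  case Nil
  then show ?case by (intro exI[of _ 1]) auto
next
  case (Cons x xs)
  obtain d1 where d1: "d1 > 0" "\<forall>y\<in>I. \<bar>y - x\<bar> < d1 \<longrightarrow> \<bar>\<phi> y - \<phi> x\<bar> < e / 2"
    using cont Cons.prems unfolding continuous_on_iff dist_real_def by (metis half_gt_zero list.set_intros(1) subsetD)
  have "set xs \<subseteq> I" "e / 2 > 0"
    using Cons.prems by auto
  then obtain d2 where d2: "d2 > 0" "\<forall>ys. length ys = length xs \<and> set ys \<subseteq> I \<and>
     (\<forall>i<length xs. \<bar>ys ! i - xs ! i\<bar> < d2) \<longrightarrow> \<bar>sum_list (map \<phi> ys) - sum_list (map \<phi> xs)\<bar> < e / 2"
    using Cons.IH by blast
  show ?case
  proof (intro exI[of _ "min d1 d2"] conjI allI impI)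
    fix ys assume ys: "length ys = length (x # xs) \<and> set ys \<subseteq> I \<and>
      (\<forall>i<length (x # xs). \<bar>ys ! i - (x # xs) ! i\<bar> < min d1 d2)"
    then obtain y ys' where ys_eq: "ys = y # ys'"
      by (cases ys) auto
    have head: "\<bar>\<phi> y - \<phi> x\<bar> < e / 2"
      using d1 ys[unfolded ys_eq] by (auto dest: spec[of _ 0])
    have "\<forall>i<length xs. \<bar>ys' ! i - xs ! i\<bar> < d2"
      using ys[unfolded ys_eq] by (auto dest!: spec[of _ "Suc _"])
    then have "\<bar>sum_list (map \<phi> ys') - sum_list (map \<phi> xs)\<bar> < e / 2"
      using d2 ys[unfolded ys_eq] by auto
    then show "\<bar>sum_list (map \<phi> ys) - sum_list (map \<phi> (x # xs))\<bar> < e"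
      unfolding ys_eq using head by simp (smt (verit))
  qed (use d1 d2 in simp)
qed

lemma strict_mono_on_preimage_above:
  fixes \<phi> :: "real \<Rightarrow> real"
  assumes interval: "is_interval I" and mono: "strict_mono_on I \<phi>" and y0: "y0 \<in> I" and e: "e > 0"
  shows "\<exists>\<eta>>0. \<forall>y\<in>I. \<bar>\<phi> y - \<phi> y0\<bar> < \<eta> \<longrightarrow> y0 - e < y"
proof (cases "y0 - e / 2 \<in> I")
  case True
  show ?thesis
  proof (intro exI[of _ "\<phi> y0 - \<phi> (y0 - e / 2)"] conjI ballI impI)
    show "\<phi> y0 - \<phi> (y0 - e / 2) > 0"
      using mono True y0 e unfolding monotone_on_def by simp
    fix y assume y: "y \<in> I" "\<bar>\<phi> y - \<phi> y0\<bar> < \<phi> y0 - \<phi> (y0 - e / 2)"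
    then have "\<phi> (y0 - e / 2) < \<phi> y"
      by (simp add: abs_less_iff)
    moreover have "\<phi> y \<le> \<phi> (y0 - e / 2)" if "y \<le> y0 - e / 2"
      using mono True y(1) that unfolding monotone_on_def by (cases "y = y0 - e / 2") (auto intro: less_imp_le)
    ultimately show "y0 - e < y"
      using e by fastforce
  qed
next
  case False
  have "y0 - e < y" if "y \<in> I" for y
  proof (rule ccontr)
    assume "\<not> y0 - e < y"
    then have "y \<le> y0 - e / 2" "y0 - e / 2 \<le> y0"
      using e by auto
    then show False
      using interval False that y0 unfolding is_interval_1 by blast
  qed
  then show ?thesis
    by (intro exI[of _ 1]) auto
qed

lemma strict_mono_on_preimage_near:
  fixes \<phi> :: "real \<Rightarrow> real"
  assumes "is_interval I" "strict_mono_on I \<phi>" "y0 \<in> I" "e > 0"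
  shows "\<exists>\<eta>>0. \<forall>y\<in>I. \<bar>\<phi> y - \<phi> y0\<bar> < \<eta> \<longrightarrow> \<bar>y - y0\<bar> < e"
proof -
  obtain \<eta>1 where \<eta>1: "\<eta>1 > 0" "\<forall>y\<in>I. \<bar>\<phi> y - \<phi> y0\<bar> < \<eta>1 \<longrightarrow> y0 - e < y"
    using strict_mono_on_preimage_above[OF assms] by blast
  have "strict_mono_on (uminus ` I) (\<lambda>x. - \<phi> (- x))"
    using assms(2) unfolding monotone_on_def by force
  then obtain \<eta>2 where \<eta>2: "\<eta>2 > 0"
    "\<forall>y\<in>uminus ` I. \<bar>- \<phi> (- y) - - \<phi> (- (- y0))\<bar> < \<eta>2 \<longrightarrow> - y0 - e < y"
    using strict_mono_on_preimage_above[of "uminus ` I" "\<lambda>x. - \<phi> (- x)" "- y0" e] assms by auto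
  have upper: "y < y0 + e" if "y \<in> I" "\<bar>\<phi> y - \<phi> y0\<bar> < \<eta>2" for y
    using \<eta>2(2)[rule_format, of "- y"] that by (simp add: abs_minus_commute)
  show ?thesis
  proof (intro exI[of _ "min \<eta>1 \<eta>2"] conjI ballI impI)
    fix y assume "y \<in> I" "\<bar>\<phi> y - \<phi> y0\<bar> < min \<eta>1 \<eta>2"
    then show "\<bar>y - y0\<bar> < e"
      using \<eta>1(2) upper[of y] by (auto simp: abs_less_iff)
  qed (use \<eta>1 \<eta>2 in simp)
qed

lemma represents_continuous:
  assumes interval: "is_interval I" and n: "n \<ge> 1" and rep: "represents I n f \<phi> J"
    and mono: "strict_mono_on I \<phi>"
  shows "continuous_nary I n f"
  unfolding continuous_nary_def
proof (intro ballI allI impI)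
  fix xs e assume xs: "xs \<in> tuples I n" and "(0::real) < e"
  note rep_values = represents_values[OF rep n]
  obtain \<eta> where \<eta>: "\<eta> > 0" "\<forall>y\<in>I. \<bar>\<phi> y - \<phi> (f xs)\<bar> < \<eta> \<longrightarrow> \<bar>y - f xs\<bar> < e"
    using strict_mono_on_preimage_near[OF interval mono rep_values(1)[OF xs] \<open>0 < e\<close>] by blast
  have "continuous_on I \<phi>" "set xs \<subseteq> I" "length xs = n"
    using rep xs unfolding represents_def tuples_def by auto
  then obtain d where d: "d > 0" "\<forall>ys\<in>tuples I n. (\<forall>i<n. \<bar>ys ! i - xs ! i\<bar> < d)
      \<longrightarrow> \<bar>sum_list (map \<phi> ys) - sum_list (map \<phi> xs)\<bar> < \<eta>"
    using sum_list_map_approx[of I \<phi> xs \<eta>] \<eta>(1) unfolding tuples_def by auto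
  show "\<exists>d>0. \<forall>ys\<in>tuples I n. (\<forall>i<n. \<bar>ys ! i - xs ! i\<bar> < d) \<longrightarrow> \<bar>f ys - f xs\<bar> < e"
    using d \<eta>(2) rep_values xs by (intro exI[of _ d]) auto
qed

lemma represents_symmetric:
  assumes rep: "represents I n f \<phi> J" and n: "n \<ge> 1"
  shows "symmetric_nary I n f"
  unfolding symmetric_nary_def
proof (intro ballI allI impI)
  fix xs \<sigma> assume xs: "xs \<in> tuples I n" and \<sigma>: "\<sigma> permutes {..<n}"
  have "sum_list (map \<phi> (map (\<lambda>i. xs ! \<sigma> i) [0..<n])) = (\<Sum>i<n. \<phi> (xs ! \<sigma> i))"
    by (simp add: sum_list_sum_nth atLeast0LessThan)
  also have "\<dots> = (\<Sum>i<n. \<phi> (xs ! i))"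
    using sum.permute[OF \<sigma>, of "\<lambda>i. \<phi> (xs ! i)"] by (simp add: comp_def)
  also have "\<dots> = sum_list (map \<phi> xs)"
    using xs unfolding tuples_def by (simp add: sum_list_sum_nth atLeast0LessThan)
  finally show "f (map (\<lambda>i. xs ! \<sigma> i) [0..<n]) = f xs"
    using rep permuted_in_tuples[OF xs \<sigma>] xs unfolding represents_def by simp
qed

lemma represents_cancellative:
  assumes rep: "represents I n f \<phi> J" and n: "n \<ge> 1"
  shows "cancellative_nary I n f"
  unfolding cancellative_nary_def
proof (intro allI impI ballI)
  fix k xs ys
  assume k: "k < n" and xs: "xs \<in> tuples I n" and ys: "ys \<in> tuples I n"
    and same: "(\<forall>i<n. i \<noteq> k \<longrightarrow> xs ! i = ys ! i) \<and> f xs = f ys"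
  have len: "length xs = n" "length ys = n"
    using xs ys unfolding tuples_def by auto
  have "(\<Sum>i<n. \<phi> (xs ! i)) = (\<Sum>i<n. \<phi> (ys ! i))"
    using represents_values(2)[OF rep n xs] represents_values(2)[OF rep n ys] same len
    by (simp add: sum_list_sum_nth atLeast0LessThan)
  moreover have "(\<Sum>i\<in>{..<n} - {k}. \<phi> (xs ! i)) = (\<Sum>i\<in>{..<n} - {k}. \<phi> (ys ! i))"
    using same by (intro sum.cong) auto
  ultimately have "\<phi> (xs ! k) = \<phi> (ys ! k)"
    using k by (simp add: sum.remove)
  moreover have "inj_on \<phi> I"
    using rep unfolding represents_def bij_betw_def by simp
  ultimately show "xs ! k = ys ! k"
    using k xs ys unfolding tuples_iff inj_on_def by blast
qed

lemma represents_associative: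
  assumes rep: "represents I n f \<phi> J" and n: "n \<ge> 1"
  shows "associative_nary I n f"
  unfolding associative_nary_def
proof (intro allI impI ballI)
  fix i xs assume i: "i < n - 1" and xs: "xs \<in> tuples I (2 * n - 1)"
  have len: "length xs = 2 * n - 1" and xs_mem: "set xs \<subseteq> I"
    using xs unfolding tuples_def by auto
  have inner_sum: "f (take j xs @ [f (take n (drop j xs))] @ drop (j + n) xs)
      = inv_into I \<phi> (sum_list (map \<phi> xs))" if j: "j \<le> n - 1" for j
  proof -
    have inner: "take n (drop j xs) \<in> tuples I n"
      unfolding tuples_def using len j xs_mem by (auto dest: in_set_takeD in_set_dropD)
    define ys where "ys = take j xs @ [f (take n (drop j xs))] @ drop (j + n) xs"
    have ys: "ys \<in> tuples I n"
      unfolding ys_def tuples_def using len j xs_mem represents_values(1)[OF rep n inner] n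
      by (auto dest: in_set_takeD in_set_dropD)
    have "sum_list (map \<phi> ys) = sum_list (map \<phi> (take j xs @ take n (drop j xs) @ drop (j + n) xs))"
      unfolding ys_def using represents_values(2)[OF rep n inner] by simp
    also have "take j xs @ take n (drop j xs) @ drop (j + n) xs = xs"
      by (metis append.assoc append_take_drop_id take_add drop_drop add.commute)
    finally show ?thesis
      using rep ys unfolding represents_def ys_def by simp
  qed
  show "f (take i xs @ [f (take n (drop i xs))] @ drop (i + n) xs) =
        f (take (Suc i) xs @ [f (take n (drop (Suc i) xs))] @ drop (Suc i + n) xs)"
    using inner_sum[of i] inner_sum[of "Suc i"] i by simp
qed

lemma represents_imp_properties:
  assumes "is_interval I" "n \<ge> 1" "represents I n f \<phi> J"
    and "strict_mono_on I \<phi> \<or> strict_antimono_on I \<phi>"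
  shows "continuous_nary I n f \<and> symmetric_nary I n f \<and> cancellative_nary I n f
    \<and> associative_nary I n f"
proof -
  have "\<exists>\<phi>' J'. represents I n f \<phi>' J' \<and> strict_mono_on I \<phi>'"
  proof (cases "strict_mono_on I \<phi>")
    case False
    then have "strict_mono_on I (\<lambda>x. - \<phi> x)"
      using assms(4) unfolding monotone_on_def by force
    then show ?thesis
      using represents_uminus[OF assms(3)] by blast
  qed (use assms(3) in blast)
  then obtain \<phi>' J' where rep: "represents I n f \<phi>' J'" and mono: "strict_mono_on I \<phi>'"
    by blast
  show ?thesis
    using represents_continuous[OF assms(1,2) rep mono] represents_symmetric[OF rep assms(2)]
      represents_cancellative[OF rep assms(2)] represents_associative[OF rep assms(2)] by blast
qed

lemma represents_not_closed:
  assumes rep: "represents I n f \<phi> J" and mono: "strict_mono_on I \<phi>"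
  shows "(\<nexists>m. m \<in> I \<and> (\<forall>x\<in>I. x \<le> m)) \<or> (\<nexists>m. m \<in> I \<and> (\<forall>x\<in>I. m \<le> x))"
proof (rule ccontr)
  assume "\<not> ?thesis"
  then obtain M m where M: "M \<in> I" "\<forall>x\<in>I. x \<le> M" and m: "m \<in> I" "\<forall>x\<in>I. m \<le> x"
    by blast
  have "J = \<phi> ` I"
    using rep unfolding represents_def bij_betw_def by simp
  moreover have "\<phi> m \<le> \<phi> x \<and> \<phi> x \<le> \<phi> M" if "x \<in> I" for x
    using mono M m that unfolding monotone_on_def by (metis order_le_less)
  ultimately have "bdd_above J" "bdd_below J"
    by (auto simp: bdd_above_def bdd_below_def)
  then show False
    using admissible_J_unbounded rep unfolding represents_def by blast
qed

theorem mainTheorem1: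
  fixes I :: "real set" and n :: nat and f :: "real list \<Rightarrow> real"
  assumes "is_interval I" and "\<exists>x\<in>I. \<exists>y\<in>I. x < y"
    and "n \<ge> 2"
    and "maps_into I n f"
  shows "((continuous_nary I n f \<and> symmetric_nary I n f \<and> cancellative_nary I n f
            \<and> associative_nary I n f)
         \<longleftrightarrow> (\<exists>\<phi> J. represents I n f \<phi> J \<and> (strict_mono_on I \<phi> \<or> strict_antimono_on I \<phi>)))
     \<and> (continuous_nary I n f \<and> symmetric_nary I n f \<and> cancellative_nary I n f
            \<and> associative_nary I n f \<longrightarrow>
         ((\<nexists>m. m \<in> I \<and> (\<forall>x\<in>I. x \<le> m)) \<or> (\<nexists>m. m \<in> I \<and> (\<forall>x\<in>I. m \<le> x)))
         \<and> (\<exists>\<phi> J. represents I n f \<phi> J \<and> strict_mono_on I \<phi>))"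
proof -
  have representation: "\<exists>\<phi> J. represents I n f \<phi> J \<and> strict_mono_on I \<phi>"
    if "continuous_nary I n f" "symmetric_nary I n f" "cancellative_nary I n f" "associative_nary I n f"
  proof -
    obtain a where "a \<in> I"
      using assms(2) by blast
    then have "nary_semigroup I n f a"
      using assms that by unfold_locales
    then show ?thesis
      by (rule nary_semigroup.exists_representation)
  qed
  moreover have "n \<ge> 1"
    using assms(3) by simp
  ultimately show ?thesis
    using represents_imp_properties[OF assms(1)] represents_not_closed by blast
qed

end
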